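(* Let $\alpha>0$ and consider the framed curvature flow with $\theta$-velocity $\upsilon_\theta=\alpha\,\partial_s^2\theta$ (i.e. the extended system below with $\beta=0$ and $f_4\equiv0$). Assume $|\theta_0(u)|<\pi/2$ for all $u\in S^1$. Then any solution $\{(\Gamma_t,\theta_t)\}_{t\in[0,\underline t]}$ satisfies $|\theta(t,u)|<\pi/2$ for all $(t,u)\in[0,\underline t]\times S^1$, and the extended system remains parabolic (i.e. $\cos\theta>0$ throughout).
   Context: $S^1=\mathbb{R}/2\pi\mathbb{Z}$; closed curves $\Gamma_t$ parametrized by $\gamma(t,\cdot):S^1\to\mathbb{R}^3$, $g=\|\partial_u\gamma\|$, $\partial_s=g^{-1}\partial_u$; Frenet frame $T,N,B$, curvature $\kappa$, torsion $\tau$. For an angle function $\theta$, $\nu_\theta=\cos\theta\,N+\sin\theta\,B$. Framed curvature flow: $\partial_t\gamma=\kappa\nu_\theta$ ($=\cos\theta\,\partial_s^2\gamma+\sin\theta\,\partial_s\gamma\times\partial_s^2\gamma$), $\partial_t\theta=\upsilon_\theta$, $\gamma(0)=\gamma_0$, $\theta(0)=\theta_0$. Extended system: with $\hat\gamma=(\gamma_1,\gamma_2,\gamma_3,\theta)$, $\partial_t\hat\gamma=\hat{\mathcal A}\,\partial_s^2\hat\gamma+f(\partial_s\hat\gamma,\hat\gamma)$, where $\hat{\mathcal A}=\begin{bmatrix}\mathcal A&0\\ \beta^T&\alpha\end{bmatrix}$, $\mathcal A=\cos\theta\,\mathbb I+\sin\theta\,[T]_\times$ ($[T]_\times$ the cross-product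 matrix of $T$), $\alpha>0$, $\beta\in\mathbb{R}^3$, so that $\upsilon_\theta=\alpha\partial_s^2\theta+\kappa\langle\beta,N\rangle+f_4(\partial_s\hat\gamma,\hat\gamma)$. The eigenvalues of $\hat{\mathcal A}$ are $\alpha,\cos\theta,e^{\pm i\theta}$; parabolicity requires $\alpha>0$ and $\cos\theta>0$. *)

theory Defs
  imports "HOL-Analysis.Analysis" "HOL-Analysis.Cross3"
begin

text \<open>A time-dependent closed curve is a map gamma :: real => real => real^3, (t,u) |-> gamma t u,
  2 pi-periodic in u (so u ranges over S^1 = R / 2 pi Z). Same for the angle theta.\<close>

definition dU :: "(real \<Rightarrow> real \<Rightarrow> 'a::real_normed_vector) \<Rightarrow> real \<Rightarrow> real \<Rightarrow> 'a" where
  "dU F t u = vector_derivative (\<lambda>v. F t v) (at u)"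

definition metric_g :: "(real \<Rightarrow> real \<Rightarrow> real^3) \<Rightarrow> real \<Rightarrow> real \<Rightarrow> real" where
  "metric_g \<gamma> t u = norm (dU \<gamma> t u)"

definition dS :: "(real \<Rightarrow> real \<Rightarrow> real^3) \<Rightarrow> (real \<Rightarrow> real \<Rightarrow> 'a::real_normed_vector) \<Rightarrow> real \<Rightarrow> real \<Rightarrow> 'a" where
  "dS \<gamma> F t u = (1 / metric_g \<gamma> t u) *\<^sub>R dU F t u"

definition dS2 :: "(real \<Rightarrow> real \<Rightarrow> real^3) \<Rightarrow> (real \<Rightarrow> real \<Rightarrow> 'a::real_normed_vector) \<Rightarrow> real \<Rightarrow> real \<Rightarrow> 'a" where
  "dS2 \<gamma> F = dS \<gamma> (dS \<gamma> F)"

definition framed_velocity :: "(real \<Rightarrow> real \<Rightarrow> real^3) \<Rightarrow> (real \<Rightarrow> real \<Rightarrow> real) \<Rightarrow> real \<Rightarrow> real \<Rightarrow> real^3" where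
  "framed_velocity \<gamma> \<theta> t u =
     cos (\<theta> t u) *\<^sub>R dS2 \<gamma> \<gamma> t u + sin (\<theta> t u) *\<^sub>R cross3 (dS \<gamma> \<gamma> t u) (dS2 \<gamma> \<gamma> t u)"

definition framed_flow_solution ::
  "real \<Rightarrow> real \<Rightarrow> (real \<Rightarrow> real \<Rightarrow> real^3) \<Rightarrow> (real \<Rightarrow> real \<Rightarrow> real)
     \<Rightarrow> (real \<Rightarrow> real^3) \<Rightarrow> (real \<Rightarrow> real) \<Rightarrow> bool" where
  "framed_flow_solution \<alpha> T \<gamma> \<theta> \<gamma>0 \<theta>0 \<longleftrightarrow>
     0 \<le> T \<and>
     \<comment> \<open>closed curves / functions on S^1\<close>
     (\<forall>t\<in>{0..T}. \<forall>u. \<gamma> t (u + 2*pi) = \<gamma> t u \<and> \<theta> t (u + 2*pi) = \<theta> t u) \<and>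
     \<comment> \<open>spatial regularity (C^2 in u) and regular parametrization\<close>
     (\<forall>t\<in>{0..T}. \<forall>u. (\<lambda>v. \<gamma> t v) differentiable (at u) \<and> (\<lambda>v. dU \<gamma> t v) differentiable (at u)
        \<and> (\<lambda>v. \<theta> t v) differentiable (at u) \<and> (\<lambda>v. dU \<theta> t v) differentiable (at u)
        \<and> dU \<gamma> t u \<noteq> 0) \<and>
     \<comment> \<open>joint continuity in (t,u) of the solution and its u-derivatives up to order 2\<close>
     continuous_on ({0..T} \<times> UNIV) (\<lambda>(t,u). \<gamma> t u) \<and>
     continuous_on ({0..T} \<times> UNIV) (\<lambda>(t,u). dU \<gamma> t u) \<and>
     continuous_on ({0..T} \<times> UNIV) (\<lambda>(t,u). dU (dU \<gamma>) t u) \<and>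
     continuous_on ({0..T} \<times> UNIV) (\<lambda>(t,u). \<theta> t u) \<and>
     continuous_on ({0..T} \<times> UNIV) (\<lambda>(t,u). dU \<theta> t u) \<and>
     continuous_on ({0..T} \<times> UNIV) (\<lambda>(t,u). dU (dU \<theta>) t u) \<and>
     \<comment> \<open>evolution equations\<close>
     (\<forall>t\<in>{0..T}. \<forall>u. ((\<lambda>s. \<gamma> s u) has_vector_derivative framed_velocity \<gamma> \<theta> t u) (at t within {0..T})) \<and>
     (\<forall>t\<in>{0..T}. \<forall>u. ((\<lambda>s. \<theta> s u) has_real_derivative \<alpha> * dS2 \<gamma> \<theta> t u) (at t within {0..T})) \<and>
     \<comment> \<open>initial data\<close>
     (\<forall>u. \<gamma> 0 u = \<gamma>0 u \<and> \<theta> 0 u = \<theta>0 u)"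

text \<open>Parabolicity of the extended system: eigenvalues alpha, cos theta, e^{+-i theta};
  requires alpha > 0 and cos theta > 0.\<close>
definition extended_parabolic :: "real \<Rightarrow> real \<Rightarrow> bool" where
  "extended_parabolic \<alpha> th \<longleftrightarrow> \<alpha> > 0 \<and> cos th > 0"

end

theory Submission
  imports Defs "HOL-Library.Periodic_Fun"
begin

text \<open>The angle equation \<open>\<partial>\<^sub>t\<theta> = \<alpha> \<partial>\<^sub>s\<^sup>2\<theta>\<close> is a heat equation in arclength and obeys the
  weak maximum principle: at a spatial maximum of \<open>\<theta>(t,\<cdot>)\<close> we have \<open>\<partial>\<^sub>u\<theta> = 0\<close>, hence
  \<open>\<partial>\<^sub>s\<^sup>2\<theta> = g\<^sup>-\<^sup>2 \<partial>\<^sub>u\<^sup>2\<theta> \<le> 0\<close>, so the maximum cannot grow; likewise the minimum cannot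
  decrease. Since \<open>\<theta>\<^sub>0\<close> is continuous on the circle, \<open>|\<theta>\<^sub>0|\<close> attains a maximum
  \<open>M < \<pi>/2\<close>, and then \<open>|\<theta>| \<le> M\<close> for all times, which gives \<open>cos \<theta> > 0\<close>.\<close>

lemma second_derivative_nonpos_at_max:
  fixes F F1 :: "real \<Rightarrow> real"
  assumes d1: "\<And>v. (F has_real_derivative F1 v) (at v)"
    and d2: "(F1 has_real_derivative F2) (at u)"
    and max: "\<And>v. F v \<le> F u"
  shows "F2 \<le> 0"
proof (rule ccontr)
  assume "\<not> F2 \<le> 0"
  hence "F2 > 0" by simp
  have crit: "F1 u = 0" using DERIV_local_max[OF d1[of u], of 1] max by auto
  obtain d where d: "d > 0" "\<And>h. h > 0 \<Longrightarrow> h < d \<Longrightarrow> F1 u < F1 (u + h)"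
    using DERIV_pos_inc_right[OF d2 \<open>F2 > 0\<close>] by blast
  obtain z where z: "u < z" "z < u + d/2" "F (u + d/2) - F u = (u + d/2 - u) * F1 z"
    using MVT2[of u "u + d/2" F F1] d1 d(1) by auto
  have "F1 z > 0" using d(2)[of "z - u"] z crit by auto
  hence "(u + d/2 - u) * F1 z > 0" using d(1) by simp
  hence "F (u + d/2) - F u > 0" using z(3) by linarith
  thus False using max[of "u + d/2"] by simp
qed

lemma second_derivative_nonneg_at_min:
  fixes F F1 :: "real \<Rightarrow> real"
  assumes d1: "\<And>v. (F has_real_derivative F1 v) (at v)"
    and d2: "(F1 has_real_derivative F2) (at u)"
    and min: "\<And>v. F u \<le> F v"
  shows "F2 \<ge> 0"
proof -
  have "- F2 \<le> 0"
    by (rule second_derivative_nonpos_at_max[of "\<lambda>v. - F v" "\<lambda>v. - F1 v"])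
       (auto intro!: DERIV_minus d1 d2 simp: min)
  thus ?thesis by simp
qed

text \<open>The factor \<open>c\<close> need only be continuous, not differentiable, because \<open>F1\<close> vanishes at \<open>u\<close>.\<close>

lemma DERIV_cont_mult_at_zero:
  fixes c F1 :: "real \<Rightarrow> real"
  assumes d: "(F1 has_real_derivative F2) (at u)"
    and zero: "F1 u = 0"
    and c: "isCont c u"
  shows "((\<lambda>v. c v * F1 v) has_real_derivative c u * F2) (at u)"
proof -
  have "((\<lambda>y. c y * ((F1 y - F1 u) / (y - u))) \<longlongrightarrow> c u * F2) (at u)"
    using c d by (intro tendsto_mult) (auto simp: isCont_def has_field_derivative_iff)
  moreover have "(\<lambda>y. c y * ((F1 y - F1 u) / (y - u))) = (\<lambda>y. (c y * F1 y - c u * F1 u) / (y - u))"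
    using zero by auto
  ultimately show ?thesis by (simp add: has_field_derivative_iff)
qed

lemma periodic_value_in_period:
  fixes f :: "real \<Rightarrow> 'a"
  assumes periodic: "\<And>x. f (x + p) = f x" and "p > 0"
  obtains x' where "x' \<in> {0..p}" "f x' = f x"
proof
  interpret periodic_fun_simple f p by standard (rule periodic)
  define k where "k = \<lfloor>x / p\<rfloor>"
  have "of_int k \<le> x / p" "x / p < of_int k + 1" unfolding k_def by linarith+
  hence "of_int k * p \<le> x" "x < (of_int k + 1) * p"
    using \<open>p > 0\<close> by (simp_all add: field_simps)
  thus "x + of_int (- k) * p \<in> {0..p}" by (simp add: algebra_simps)
  show "f (x + of_int (- k) * p) = f x" by (rule plus_of_int)
qed

lemma periodic_attains_max:
  fixes f :: "real \<Rightarrow> real"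
  assumes periodic: "\<And>x. f (x + p) = f x" and "p > 0" and cont: "continuous_on {0..p} f"
  obtains x where "\<And>y. f y \<le> f x"
proof -
  obtain x where x: "\<And>y. y \<in> {0..p} \<Longrightarrow> f y \<le> f x"
    using continuous_attains_sup[OF compact_Icc _ cont] \<open>p > 0\<close> by fastforce
  have "f y \<le> f x" for y
    using periodic_value_in_period[of f p y, OF periodic \<open>p > 0\<close>] x by metis
  thus thesis by (rule that)
qed

text \<open>By periodicity it suffices to search the compact set \<open>{0..T} \<times> {0..p}\<close>.\<close>

lemma first_time_reaching_level:
  fixes w :: "real \<Rightarrow> real \<Rightarrow> real"
  assumes "p > 0"
    and periodic: "\<And>t x. t \<in> {0..T} \<Longrightarrow> w t (x + p) = w t x"
    and cont: "continuous_on ({0..T} \<times> UNIV) (\<lambda>(t, x). w t x)"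
    and reached: "t \<in> {0..T}" "L \<le> w t x"
  obtains t0 x0 where "t0 \<in> {0..T}" "L \<le> w t0 x0"
    and "\<And>s y. s \<in> {0..T} \<Longrightarrow> L \<le> w s y \<Longrightarrow> t0 \<le> s"
proof -
  define K where "K = ({0..T} \<times> {0..p}) \<inter> (\<lambda>(t, x). w t x) -` {L..}"
  have "closed K" unfolding K_def
    using cont by (intro continuous_closed_preimage) (auto intro: continuous_on_subset simp: closed_Times)
  moreover have "K = K \<inter> ({0..T} \<times> {0..p})" unfolding K_def by blast
  ultimately have "compact K" by (metis closed_Int_compact compact_Icc compact_Times)
  have in_K: "\<exists>y'. (s, y') \<in> K" if "s \<in> {0..T}" "L \<le> w s y" for s y
    using periodic_value_in_period[of "w s" p y, OF periodic[OF \<open>s \<in> {0..T}\<close>] \<open>p > 0\<close>] that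
    unfolding K_def by (metis (mono_tags) IntI SigmaI atLeast_iff case_prod_conv vimageI)
  then obtain y' where "(t, y') \<in> K" using reached by blast
  then obtain q where q: "q \<in> K" "\<And>q'. q' \<in> K \<Longrightarrow> fst q \<le> fst q'"
    using continuous_attains_inf[OF \<open>compact K\<close> _ continuous_on_fst[OF continuous_on_id]] by blast
  show thesis
  proof (rule that[of "fst q" "snd q"])
    show "fst q \<in> {0..T}" "L \<le> w (fst q) (snd q)" using q(1) unfolding K_def by auto
    show "fst q \<le> s" if "s \<in> {0..T}" "L \<le> w s y" for s y
      using in_K[OF that] q(2) by fastforce
  qed
qed

text \<open>The proof penalizes \<open>\<phi>\<close> by \<open>-\<epsilon>t\<close>, which makes the time derivative
  at a spatial maximum strictly negative; at the first time the penalized function reaches a level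
  above the initial bound it would then have been even larger slightly earlier.\<close>

lemma periodic_max_principle:
  fixes \<phi> :: "real \<Rightarrow> real \<Rightarrow> real"
  assumes "p > 0"
    and periodic: "\<And>t x. t \<in> {0..T} \<Longrightarrow> \<phi> t (x + p) = \<phi> t x"
    and cont: "continuous_on ({0..T} \<times> UNIV) (\<lambda>(t, x). \<phi> t x)"
    and deriv_at_max: "\<And>t x. t \<in> {0..T} \<Longrightarrow> (\<And>y. \<phi> t y \<le> \<phi> t x) \<Longrightarrow>
        \<exists>D\<le>0. ((\<lambda>s. \<phi> s x) has_real_derivative D) (at t within {0..T})"
    and init: "\<And>x. \<phi> 0 x \<le> M"
    and "t \<in> {0..T}"
  shows "\<phi> t x \<le> M"
proof (rule ccontr)
  assume "\<not> \<phi> t x \<le> M"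
  define a where "a = \<phi> t x - M"
  define \<epsilon> where "\<epsilon> = a / (2 * (T + 1))"
  define w where "w = (\<lambda>s y. \<phi> s y - \<epsilon> * s)"
  define L where "L = M + a / 2"
  have "a > 0" "0 \<le> t" "t \<le> T" using \<open>\<not> \<phi> t x \<le> M\<close> \<open>t \<in> {0..T}\<close> by (auto simp: a_def)
  hence "\<epsilon> > 0" by (simp add: \<epsilon>_def)
  hence "\<epsilon> * t \<le> \<epsilon> * (T + 1)" using \<open>t \<le> T\<close> by simp
  also have "\<epsilon> * (T + 1) = a / 2" using \<open>0 \<le> t\<close> \<open>t \<le> T\<close> by (simp add: \<epsilon>_def field_simps)
  finally have "\<epsilon> * t \<le> a / 2" .
  hence "L \<le> w t x" unfolding w_def L_def a_def by argo
  moreover have "\<And>s y. s \<in> {0..T} \<Longrightarrow> w s (y + p) = w s y" using periodic by (simp add: w_def)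
  moreover have "continuous_on ({0..T} \<times> UNIV) (\<lambda>(s, y). w s y)"
    using cont unfolding w_def case_prod_beta by (intro continuous_intros)
  ultimately obtain t0 x0 where t0: "t0 \<in> {0..T}" "L \<le> w t0 x0"
    and first: "\<And>s y. s \<in> {0..T} \<Longrightarrow> L \<le> w s y \<Longrightarrow> t0 \<le> s"
    using first_time_reaching_level[OF \<open>p > 0\<close>, of T w] \<open>t \<in> {0..T}\<close> by blast
  have "t0 \<noteq> 0" using t0(2) init[of x0] \<open>a > 0\<close> by (auto simp: w_def L_def)
  hence "t0 > 0" using t0(1) by simp
  have "continuous_on {0..p} (\<phi> t0)"
    using continuous_on_o_Pair[OF cont t0(1)] by (auto intro: continuous_on_subset simp: o_def)
  then obtain x1 where max: "\<And>y. \<phi> t0 y \<le> \<phi> t0 x1"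
    using periodic_attains_max[of "\<phi> t0" p, OF periodic[OF t0(1)] \<open>p > 0\<close>] by blast
  hence "L \<le> w t0 x1" using t0(2) max[of x0] unfolding w_def by linarith
  obtain D where "D \<le> 0" and D: "((\<lambda>s. \<phi> s x1) has_real_derivative D) (at t0 within {0..T})"
    using deriv_at_max[OF t0(1) max] by blast
  have "((\<lambda>s. w s x1) has_real_derivative D - \<epsilon>) (at t0 within {0..T})"
    unfolding w_def by (auto intro!: derivative_eq_intros D)
  moreover have "D - \<epsilon> < 0" using \<open>D \<le> 0\<close> \<open>\<epsilon> > 0\<close> by simp
  ultimately obtain d where "d > 0"
    and dec: "\<And>h. h > 0 \<Longrightarrow> t0 - h \<in> {0..T} \<Longrightarrow> h < d \<Longrightarrow> w t0 x1 < w (t0 - h) x1"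
    using has_real_derivative_neg_dec_left by blast
  define h where "h = min t0 (d / 2)"
  have "h > 0" "t0 - h \<in> {0..T}" "h < d" using \<open>t0 > 0\<close> \<open>d > 0\<close> t0(1) by (auto simp: h_def)
  hence "L \<le> w (t0 - h) x1" using dec \<open>L \<le> w t0 x1\<close> by fastforce
  hence "t0 \<le> t0 - h" using first \<open>t0 - h \<in> {0..T}\<close> by blast
  thus False using \<open>h > 0\<close> by simp
qed

lemma has_real_derivative_dU:
  fixes F :: "real \<Rightarrow> real \<Rightarrow> real"
  assumes "(\<lambda>v. F t v) differentiable (at u)"
  shows "((\<lambda>v. F t v) has_real_derivative dU F t u) (at u)"
  using assms vector_derivative_works has_real_derivative_iff_has_vector_derivative
  unfolding dU_def by blast

lemma dS2_at_critical_point: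
  fixes \<gamma> :: "real \<Rightarrow> real \<Rightarrow> real^3" and \<theta> :: "real \<Rightarrow> real \<Rightarrow> real"
  assumes d\<theta>: "(\<lambda>v. dU \<theta> t v) differentiable (at u)"
    and d\<gamma>: "(\<lambda>v. dU \<gamma> t v) differentiable (at u)"
    and regular: "dU \<gamma> t u \<noteq> 0"
    and crit: "dU \<theta> t u = 0"
  shows "dS2 \<gamma> \<theta> t u = dU (dU \<theta>) t u / (metric_g \<gamma> t u)\<^sup>2"
proof -
  define c where "c = (\<lambda>v. 1 / metric_g \<gamma> t v)"
  have "isCont c u"
    using differentiable_imp_continuous_within[OF d\<gamma>] regular
    unfolding c_def metric_g_def by (auto intro!: continuous_intros)
  moreover note has_real_derivative_dU[of "dU \<theta>" t u, OF d\<theta>]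
  ultimately have "((\<lambda>v. c v * dU \<theta> t v) has_real_derivative c u * dU (dU \<theta>) t u) (at u)"
    using DERIV_cont_mult_at_zero crit by blast
  moreover have "(\<lambda>v. dS \<gamma> \<theta> t v) = (\<lambda>v. c v * dU \<theta> t v)"
    by (simp add: dS_def c_def)
  ultimately have "dU (dS \<gamma> \<theta>) t u = c u * dU (dU \<theta>) t u"
    unfolding dU_def by (metis has_real_derivative_iff_has_vector_derivative vector_derivative_at)
  thus ?thesis by (simp add: dS2_def dS_def c_def power2_eq_square)
qed

lemma dS2_nonpos_at_max:
  fixes \<gamma> :: "real \<Rightarrow> real \<Rightarrow> real^3" and \<theta> :: "real \<Rightarrow> real \<Rightarrow> real"
  assumes d\<theta>: "\<And>v. (\<lambda>v. \<theta> t v) differentiable (at v)" "(\<lambda>v. dU \<theta> t v) differentiable (at u)"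
    and d\<gamma>: "(\<lambda>v. dU \<gamma> t v) differentiable (at u)"
    and regular: "dU \<gamma> t u \<noteq> 0"
    and max: "\<And>v. \<theta> t v \<le> \<theta> t u"
  shows "dS2 \<gamma> \<theta> t u \<le> 0"
proof -
  note D1 = has_real_derivative_dU[of \<theta> t, OF d\<theta>(1)]
    and D2 = has_real_derivative_dU[of "dU \<theta>" t u, OF d\<theta>(2)]
  have "dU \<theta> t u = 0" using DERIV_local_max[OF D1[of u], of 1] max by auto
  moreover have "dU (dU \<theta>) t u \<le> 0" using second_derivative_nonpos_at_max[OF D1 D2 max] .
  ultimately show ?thesis
    using dS2_at_critical_point[OF d\<theta>(2) d\<gamma> regular] by (simp add: divide_nonpos_nonneg)
qed

lemma dS2_nonneg_at_min:
  fixes \<gamma> :: "real \<Rightarrow> real \<Rightarrow> real^3" and \<theta> :: "real \<Rightarrow> real \<Rightarrow> real"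
  assumes d\<theta>: "\<And>v. (\<lambda>v. \<theta> t v) differentiable (at v)" "(\<lambda>v. dU \<theta> t v) differentiable (at u)"
    and d\<gamma>: "(\<lambda>v. dU \<gamma> t v) differentiable (at u)"
    and regular: "dU \<gamma> t u \<noteq> 0"
    and min: "\<And>v. \<theta> t u \<le> \<theta> t v"
  shows "dS2 \<gamma> \<theta> t u \<ge> 0"
proof -
  note D1 = has_real_derivative_dU[of \<theta> t, OF d\<theta>(1)]
    and D2 = has_real_derivative_dU[of "dU \<theta>" t u, OF d\<theta>(2)]
  have "dU \<theta> t u = 0" using DERIV_local_min[OF D1[of u], of 1] min by auto
  moreover have "dU (dU \<theta>) t u \<ge> 0" using second_derivative_nonneg_at_min[OF D1 D2 min] .
  ultimately show ?thesis using dS2_at_critical_point[OF d\<theta>(2) d\<gamma> regular] by simp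
qed

lemma framed_flow_solutionD:
  assumes "framed_flow_solution \<alpha> T \<gamma> \<theta> \<gamma>0 \<theta>0"
  shows "0 \<le> T"
    and "\<And>t u. t \<in> {0..T} \<Longrightarrow> \<theta> t (u + 2 * pi) = \<theta> t u"
    and "continuous_on ({0..T} \<times> UNIV) (\<lambda>(t, u). \<theta> t u)"
    and "\<And>t v. t \<in> {0..T} \<Longrightarrow> (\<lambda>v. \<theta> t v) differentiable (at v)"
    and "\<And>t u. t \<in> {0..T} \<Longrightarrow> (\<lambda>v. dU \<theta> t v) differentiable (at u)"
    and "\<And>t u. t \<in> {0..T} \<Longrightarrow> (\<lambda>v. dU \<gamma> t v) differentiable (at u)"
    and "\<And>t u. t \<in> {0..T} \<Longrightarrow> dU \<gamma> t u \<noteq> 0"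
    and "\<And>t u. t \<in> {0..T} \<Longrightarrow>
      ((\<lambda>s. \<theta> s u) has_real_derivative \<alpha> * dS2 \<gamma> \<theta> t u) (at t within {0..T})"
    and "\<And>u. \<theta> 0 u = \<theta>0 u"
  using assms unfolding framed_flow_solution_def by simp_all

lemma framed_flow_angle_le:
  assumes sol: "framed_flow_solution \<alpha> T \<gamma> \<theta> \<gamma>0 \<theta>0" and "0 \<le> \<alpha>"
    and init: "\<And>u. \<theta>0 u \<le> M" and "t \<in> {0..T}"
  shows "\<theta> t u \<le> M"
proof (rule periodic_max_principle[of "2 * pi" T \<theta>])
  show "\<exists>D\<le>0. ((\<lambda>s. \<theta> s u) has_real_derivative D) (at t within {0..T})"
    if "t \<in> {0..T}" "\<And>v. \<theta> t v \<le> \<theta> t u" for t u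
    using framed_flow_solutionD(8)[OF sol that(1)] \<open>0 \<le> \<alpha>\<close>
      dS2_nonpos_at_max[OF framed_flow_solutionD(4-7)[OF sol that(1)] that(2)]
    by (intro exI[of _ "\<alpha> * dS2 \<gamma> \<theta> t u"]) (simp add: mult_nonneg_nonpos)
qed (use framed_flow_solutionD[OF sol] init \<open>t \<in> {0..T}\<close> in auto)

lemma framed_flow_angle_ge:
  assumes sol: "framed_flow_solution \<alpha> T \<gamma> \<theta> \<gamma>0 \<theta>0" and "0 \<le> \<alpha>"
    and init: "\<And>u. m \<le> \<theta>0 u" and "t \<in> {0..T}"
  shows "m \<le> \<theta> t u"
proof -
  have "- \<theta> t u \<le> - m"
  proof (rule periodic_max_principle[of "2 * pi" T "\<lambda>t u. - \<theta> t u"])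
    show "\<exists>D\<le>0. ((\<lambda>s. - \<theta> s u) has_real_derivative D) (at t within {0..T})"
      if "t \<in> {0..T}" "\<And>v. - \<theta> t v \<le> - \<theta> t u" for t u
      using DERIV_minus[OF framed_flow_solutionD(8)[OF sol that(1)]] \<open>0 \<le> \<alpha>\<close>
        dS2_nonneg_at_min[OF framed_flow_solutionD(4-7)[OF sol that(1)]] that(2)
      by (auto intro!: exI[of _ "- (\<alpha> * dS2 \<gamma> \<theta> t u)"])
  qed (use framed_flow_solutionD[OF sol] init \<open>t \<in> {0..T}\<close> in
        \<open>auto simp: case_prod_beta intro: continuous_on_minus\<close>)
  thus ?thesis by simp
qed

theorem mainTheorem3:
  fixes \<alpha> T :: real and \<gamma> :: "real \<Rightarrow> real \<Rightarrow> real^3" and \<theta> :: "real \<Rightarrow> real \<Rightarrow> real"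
    and \<gamma>0 :: "real \<Rightarrow> real^3" and \<theta>0 :: "real \<Rightarrow> real"
  assumes "\<alpha> > 0"
    and "\<forall>u. \<bar>\<theta>0 u\<bar> < pi / 2"
    and "framed_flow_solution \<alpha> T \<gamma> \<theta> \<gamma>0 \<theta>0"
  shows "\<forall>t\<in>{0..T}. \<forall>u. \<bar>\<theta> t u\<bar> < pi / 2 \<and> extended_parabolic \<alpha> (\<theta> t u)"
proof -
  note sol = framed_flow_solutionD[OF assms(3)]
  have "0 \<in> {0..T}" using sol(1) by simp
  have "continuous_on {0..2 * pi} (\<lambda>u. \<bar>\<theta>0 u\<bar>)"
    using continuous_on_o_Pair[OF sol(3) \<open>0 \<in> {0..T}\<close>]
    by (auto simp: o_def sol(9) intro: continuous_on_subset continuous_on_rabs)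
  then obtain u0 where u0: "\<And>u. \<bar>\<theta>0 u\<bar> \<le> \<bar>\<theta>0 u0\<bar>"
    using periodic_attains_max[of "\<lambda>u. \<bar>\<theta>0 u\<bar>" "2 * pi"] sol(2)[OF \<open>0 \<in> {0..T}\<close>]
    by (auto simp: sol(9))
  define M where "M = \<bar>\<theta>0 u0\<bar>"
  have "\<theta>0 u \<le> M" "- M \<le> \<theta>0 u" for u using u0[of u] unfolding M_def by linarith+
  hence bound: "\<bar>\<theta> t u\<bar> \<le> M" if "t \<in> {0..T}" for t u
    using framed_flow_angle_le[OF assms(3) _ _ that, of M]
      framed_flow_angle_ge[OF assms(3) _ _ that, of "- M"] \<open>\<alpha> > 0\<close> by (simp add: abs_le_iff minus_le_iff)
  have "M < pi / 2" using assms(2) by (simp add: M_def)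
  show ?thesis
  proof (intro ballI allI conjI)
    fix t u assume "t \<in> {0..T}"
    show "\<bar>\<theta> t u\<bar> < pi / 2" using bound[OF \<open>t \<in> {0..T}\<close>, of u] \<open>M < pi / 2\<close> by linarith
    thus "extended_parabolic \<alpha> (\<theta> t u)"
      unfolding extended_parabolic_def using \<open>\<alpha> > 0\<close> cos_gt_zero_pi by (simp add: abs_less_iff)
  qed
qed

end
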